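(* Let $\{a(n)\}_{n\in\mathbb{N}}$ be a sequence of non-negative numbers with $\sum_{n=1}^{\infty}a(n)\le 1$. Then for every $\alpha>1$ there exist $\varepsilon(\alpha)>0$ and $\nu(\alpha)\in\mathbb{N}$ such that for every integer $N\ge\nu(\alpha)$ there is a positive integer $\ell=\ell_{\alpha,N}<N^{\alpha}$ such that, with $B_{\alpha,N}:=\{\ell,2\ell,\ldots,N\ell\}$, one has $\sum_{\lambda,\mu\in B_{\alpha,N},\ \mu<\lambda}a(\lambda-\mu)<\frac{1}{N^{\varepsilon(\alpha)}}$. *)

theory Defs
  imports "HOL-Analysis.Analysis"
begin

end

theory Submission
  imports Defs "HOL-Computational_Algebra.Primes" "HOL-Real_Asymp.Real_Asymp"
begin

text \<open>
  Take \<open>l = 1 + q j\<close> with \<open>j < R\<close>, where \<open>q = K!\<close> and \<open>R\<close> is about \<open>N^\<alpha> / q\<close>.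
  For \<open>B = {l, 2l, ..., Nl}\<close> the pair sum is at most \<open>N * (\<Sum>k<N. a (k l))\<close>.
  Summed over all \<open>j\<close>, each \<open>a m\<close> is counted at most as often as \<open>m\<close> has a divisor
  coprime to \<open>q\<close>; all primes not dividing \<open>q\<close> exceed \<open>K\<close>, so for large \<open>K\<close> this number
  is at most \<open>m^\<delta>\<close>, i.e. at most \<open>N^\<epsilon>\<close>. Hence some \<open>j\<close> gives a pair sum of
  at most \<open>N^(1+\<epsilon>) / R\<close>, roughly \<open>q N^(1+\<epsilon>-\<alpha>)\<close>, which is below \<open>N^-\<epsilon>\<close>
  when \<open>\<alpha> = 1 + 3\<epsilon>\<close>.
\<close>

definition coprime_divisors :: "nat \<Rightarrow> nat \<Rightarrow> nat set" where
  "coprime_divisors q m = {d. d dvd m \<and> coprime d q}"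

definition ordered_pairs :: "'a::linorder set \<Rightarrow> ('a \<times> 'a) set" where
  "ordered_pairs B = {(x, y). x \<in> B \<and> y \<in> B \<and> y < x}"

lemma finite_coprime_divisors: "m > 0 \<Longrightarrow> finite (coprime_divisors q m)"
  unfolding coprime_divisors_def by (rule finite_subset[of _ "{d. d dvd m}"]) auto

lemma coprime_divisors_subset_one:
  assumes "\<And>p. prime p \<Longrightarrow> p dvd m \<Longrightarrow> p dvd q"
  shows "coprime_divisors q m \<subseteq> {1}"
proof
  fix d assume d: "d \<in> coprime_divisors q m"
  show "d \<in> {1}"
  proof (rule ccontr)
    assume "d \<notin> {1}"
    then obtain p where p: "prime p" "p dvd d" using prime_factor_nat by auto
    with d assms have "p dvd q" by (auto simp: coprime_divisors_def)
    moreover from d have "coprime d q" by (simp add: coprime_divisors_def)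
    ultimately have "is_unit p" using p(2) coprime_common_divisor by blast
    with p show False by simp
  qed
qed

lemma coprime_divisors_prime_mult_subset:
  assumes "prime p" and "\<not> p dvd q"
  shows "coprime_divisors q (p * r) \<subseteq> coprime_divisors q r \<union> (\<lambda>d. p * d) ` coprime_divisors q r"
proof
  fix d assume d: "d \<in> coprime_divisors q (p * r)"
  show "d \<in> coprime_divisors q r \<union> (\<lambda>d. p * d) ` coprime_divisors q r"
  proof (cases "p dvd d")
    case True
    then obtain e where e: "d = p * e" by blast
    with d assms(1) have "e \<in> coprime_divisors q r"
      by (auto simp: coprime_divisors_def prime_gt_0_nat)
    with e show ?thesis by blast
  next
    case False
    with assms(1) have "coprime d p" by (metis prime_imp_coprime coprime_commute)
    with d have "d \<in> coprime_divisors q r"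
      by (auto simp: coprime_divisors_def coprime_dvd_mult_right_iff)
    then show ?thesis by blast
  qed
qed

text \<open>Every prime factor of \<open>m\<close> outside \<open>q\<close> at most doubles the count and
  contributes at least the factor \<open>2\<close> to \<open>m powr \<delta>\<close>.\<close>

lemma card_coprime_divisors_le_powr:
  fixes \<delta> :: real
  assumes \<delta>: "\<delta> \<ge> 0" and large: "\<And>p. prime p \<Longrightarrow> \<not> p dvd q \<Longrightarrow> 2 \<le> real p powr \<delta>"
  shows "m > 0 \<Longrightarrow> real (card (coprime_divisors q m)) \<le> real m powr \<delta>"
proof (induction m rule: less_induct)
  case (less m)
  show ?case
  proof (cases "\<exists>p. prime p \<and> p dvd m \<and> \<not> p dvd q")
    case True
    then obtain p r where p: "prime p" "\<not> p dvd q" and m: "m = p * r" by blast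
    have "r > 0" "r < m"
      using less.prems m prime_gt_1_nat[OF p(1)] by (auto intro!: Nat.gr0I)
    have fin: "finite (coprime_divisors q r)" by (rule finite_coprime_divisors) fact
    have "card (coprime_divisors q m)
        \<le> card (coprime_divisors q r \<union> (\<lambda>d. p * d) ` coprime_divisors q r)"
      unfolding m using coprime_divisors_prime_mult_subset[OF p] fin by (intro card_mono) auto
    also have "\<dots> \<le> 2 * card (coprime_divisors q r)"
      using card_Un_le[of "coprime_divisors q r" "(\<lambda>d. p * d) ` coprime_divisors q r"]
        card_image_le[OF fin, of "\<lambda>d. p * d"] by linarith
    finally have "real (card (coprime_divisors q m)) \<le> 2 * real (card (coprime_divisors q r))"
      by linarith
    also have "\<dots> \<le> 2 * real r powr \<delta>" using less.IH[OF \<open>r < m\<close> \<open>r > 0\<close>] by simp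
    also have "\<dots> \<le> real p powr \<delta> * real r powr \<delta>"
      using large[OF p] by (intro mult_right_mono) auto
    also have "\<dots> = real m powr \<delta>" by (simp add: m powr_mult)
    finally show ?thesis .
  next
    case False
    then have "card (coprime_divisors q m) \<le> 1"
      using card_mono[OF _ coprime_divisors_subset_one] by fastforce
    moreover have "1 \<le> real m powr \<delta>" using less.prems \<delta> by (intro ge_one_powr_ge_zero) auto
    ultimately show ?thesis by linarith
  qed
qed

lemma ex_card_coprime_divisors_le_powr:
  fixes \<delta> :: real
  assumes "\<delta> > 0"
  shows "\<exists>q > 0. \<forall>m > 0. real (card (coprime_divisors q m)) \<le> real m powr \<delta>"
proof -
  define K where "K = nat \<lceil>2 powr (1 / \<delta>)\<rceil>"
  have K: "2 powr (1 / \<delta>) \<le> real K" unfolding K_def by linarith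
  have "2 \<le> real p powr \<delta>" if "prime p" "\<not> p dvd fact K" for p
  proof -
    from that have "K < p" by (simp add: prime_dvd_fact_iff)
    have "2 = (2 powr (1 / \<delta>)) powr \<delta>" using assms by (simp add: powr_powr)
    also have "\<dots> \<le> real p powr \<delta>"
      using K \<open>K < p\<close> assms by (intro powr_mono2) auto
    finally show ?thesis .
  qed
  then show ?thesis
    using card_coprime_divisors_le_powr[of \<delta> "fact K"] assms by (intro exI[of _ "fact K"]) auto
qed

lemma coprime_one_plus_mult: "coprime (1 + q * j) (q :: nat)"
  by (metis coprime_add_one_left coprime_mult_left_iff add.commute mult.commute coprime_commute)

text \<open>The divisor \<open>1 + q * j\<close> of \<open>m = k * (1 + q * j)\<close> is coprime to \<open>q\<close> and
  determines \<open>(j, k)\<close>.\<close>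

lemma card_dilation_fiber_le:
  assumes "q > 0" and "m > 0"
  shows "card {x \<in> S. snd x * (1 + q * fst x) = m} \<le> card (coprime_divisors q m)"
proof (rule card_inj_on_le)
  show "inj_on (\<lambda>x. 1 + q * fst x) {x \<in> S. snd x * (1 + q * fst x) = m}"
  proof (rule inj_onI)
    fix x y
    assume "x \<in> {x \<in> S. snd x * (1 + q * fst x) = m}" "y \<in> {x \<in> S. snd x * (1 + q * fst x) = m}"
      and "1 + q * fst x = 1 + q * fst y"
    with assms(1) have "fst x = fst y" and "snd x * (1 + q * fst x) = snd y * (1 + q * fst x)"
      by auto
    from this(2) have "snd x = snd y" unfolding mult_cancel2 by simp
    with \<open>fst x = fst y\<close> show "x = y" by (simp add: prod_eq_iff)
  qed
  show "(\<lambda>x. 1 + q * fst x) ` {x \<in> S. snd x * (1 + q * fst x) = m} \<subseteq> coprime_divisors q m"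
  proof
    fix d assume "d \<in> (\<lambda>x. 1 + q * fst x) ` {x \<in> S. snd x * (1 + q * fst x) = m}"
    then obtain x where m: "m = snd x * (1 + q * fst x)" and d: "d = 1 + q * fst x"
      by auto
    have "d dvd m" unfolding m d by (rule dvd_triv_right)
    moreover have "coprime d q" unfolding d by (rule coprime_one_plus_mult)
    ultimately show "d \<in> coprime_divisors q m" by (simp add: coprime_divisors_def)
  qed
  show "finite (coprime_divisors q m)" by (rule finite_coprime_divisors) fact
qed

lemma sum_dilations_le:
  fixes a :: "nat \<Rightarrow> real"
  assumes nonneg: "\<And>n. n \<ge> 1 \<Longrightarrow> a n \<ge> 0" and sum_le: "\<And>M. (\<Sum>n=1..M. a n) \<le> 1"
    and "q > 0" and "C \<ge> 0"
    and divisors: "\<And>j k. j < R \<Longrightarrow> k \<in> {1..<N} \<Longrightarrow>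
      real (card (coprime_divisors q (k * (1 + q * j)))) \<le> C"
  shows "(\<Sum>j<R. \<Sum>k\<in>{1..<N}. a (k * (1 + q * j))) \<le> C"
proof -
  let ?S = "{..<R} \<times> {1..<N}"
  define f where "f x = snd x * (1 + q * fst x)" for x :: "nat \<times> nat"
  have "(\<Sum>j<R. \<Sum>k\<in>{1..<N}. a (k * (1 + q * j))) = (\<Sum>x\<in>?S. a (f x))"
    by (simp add: sum.cartesian_product f_def case_prod_beta)
  also have "\<dots> = (\<Sum>m\<in>f ` ?S. \<Sum>x\<in>{x \<in> ?S. f x = m}. a (f x))"
    by (rule sum.image_gen) simp
  also have "\<dots> = (\<Sum>m\<in>f ` ?S. real (card {x \<in> ?S. f x = m}) * a m)"
    by simp
  also have "\<dots> \<le> (\<Sum>m\<in>f ` ?S. C * a m)"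
  proof (rule sum_mono)
    fix m assume "m \<in> f ` ?S"
    then obtain j k where jk: "j < R" "k \<in> {1..<N}" and m: "m = k * (1 + q * j)"
      by (auto simp: f_def)
    then have "m > 0" by simp
    have "real (card {x \<in> ?S. f x = m}) \<le> C"
      using card_dilation_fiber_le[OF \<open>q > 0\<close> \<open>m > 0\<close>, of ?S] divisors[OF jk]
      unfolding f_def m by linarith
    then show "real (card {x \<in> ?S. f x = m}) * a m \<le> C * a m"
      using nonneg \<open>m > 0\<close> by (intro mult_right_mono) auto
  qed
  also have "\<dots> \<le> C * (\<Sum>m=1..N * (1 + q * R). a m)"
    unfolding sum_distrib_left[symmetric]
  proof (intro mult_left_mono sum_mono2)
    show "f ` ?S \<subseteq> {1..N * (1 + q * R)}"
    proof
      fix m assume "m \<in> f ` ?S"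
      then obtain j k where "j < R" "k \<in> {1..<N}" and m: "m = k * (1 + q * j)"
        by (auto simp: f_def)
      then have "k * (1 + q * j) \<le> N * (1 + q * R)" by (intro mult_le_mono) auto
      with \<open>k \<in> {1..<N}\<close> show "m \<in> {1..N * (1 + q * R)}" by (simp add: m)
    qed
  qed (use nonneg \<open>C \<ge> 0\<close> in auto)
  also have "\<dots> \<le> C"
    using mult_left_mono[OF sum_le \<open>C \<ge> 0\<close>] by simp
  finally show ?thesis .
qed

lemma sum_ordered_pairs_dilation_le:
  fixes a :: "nat \<Rightarrow> real"
  assumes nonneg: "\<And>n. n \<ge> 1 \<Longrightarrow> a n \<ge> 0" and "l > 0"
  shows "(\<Sum>(x, y)\<in>ordered_pairs ((\<lambda>k. k * l) ` {1..N}). a (x - y))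
    \<le> real N * (\<Sum>k\<in>{1..<N}. a (k * l))"
proof -
  let ?P = "ordered_pairs ((\<lambda>k. k * l) ` {1..N})"
  define g where "g = (\<lambda>(x, y). (y div l, (x - y) div l))"
  have P: "?P = {(i * l, j * l) | i j. i \<in> {1..N} \<and> j \<in> {1..N} \<and> j < i}"
    using \<open>l > 0\<close> by (auto simp: ordered_pairs_def)
  have g: "g (i * l, j * l) = (j, i - j)" for i j
    using \<open>l > 0\<close> by (simp add: g_def diff_mult_distrib[symmetric])
  have "inj_on g ?P"
  proof (rule inj_onI)
    fix z w assume "z \<in> ?P" "w \<in> ?P" "g z = g w"
    then show "z = w" unfolding P by (auto simp: g)
  qed
  have img: "g ` ?P \<subseteq> {1..N} \<times> {1..<N}"
    unfolding P by (auto simp: g)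
  have "(\<Sum>(x, y)\<in>?P. a (x - y)) = (\<Sum>z\<in>?P. (\<lambda>(j, k). a (k * l)) (g z))"
  proof (rule sum.cong[OF refl])
    fix z assume "z \<in> ?P"
    then show "(case z of (x, y) \<Rightarrow> a (x - y)) = (\<lambda>(j, k). a (k * l)) (g z)"
      unfolding P by (auto simp: g diff_mult_distrib)
  qed
  also have "\<dots> = (\<Sum>z\<in>g ` ?P. (\<lambda>(j, k). a (k * l)) z)"
    by (subst sum.reindex[OF \<open>inj_on g ?P\<close>]) (simp add: comp_def)
  also have "\<dots> \<le> (\<Sum>z\<in>{1..N} \<times> {1..<N}. (\<lambda>(j, k). a (k * l)) z)"
    by (rule sum_mono2) (use img nonneg \<open>l > 0\<close> in auto)
  also have "\<dots> = real N * (\<Sum>k\<in>{1..<N}. a (k * l))"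
    by (simp add: sum.cartesian_product[symmetric])
  finally show ?thesis .
qed

lemma ex_dilation_sum_ordered_pairs_le:
  fixes a :: "nat \<Rightarrow> real"
  assumes nonneg: "\<And>n. n \<ge> 1 \<Longrightarrow> a n \<ge> 0" and sum_le: "\<And>M. (\<Sum>n=1..M. a n) \<le> 1"
    and "q > 0" and "C \<ge> 0" and "R > 0"
    and divisors: "\<And>j k. j < R \<Longrightarrow> k \<in> {1..<N} \<Longrightarrow>
      real (card (coprime_divisors q (k * (1 + q * j)))) \<le> C"
  shows "\<exists>j<R. (\<Sum>(x, y)\<in>ordered_pairs ((\<lambda>k. k * (1 + q * j)) ` {1..N}). a (x - y))
    \<le> real N * C / real R"
proof -
  define G where "G j = (\<Sum>k\<in>{1..<N}. a (k * (1 + q * j)))" for j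
  obtain j where "j < R" and "G j \<le> C / real R"
  proof (rule ccontr)
    assume "\<not> thesis"
    then have "\<And>j. j < R \<Longrightarrow> C / real R < G j" using that by force
    then have "(\<Sum>j<R. C / real R) < (\<Sum>j<R. G j)"
      using \<open>R > 0\<close> by (intro sum_strict_mono) auto
    moreover have "(\<Sum>j<R. G j) \<le> C"
      unfolding G_def by (rule sum_dilations_le[OF nonneg sum_le \<open>q > 0\<close> \<open>C \<ge> 0\<close> divisors])
    ultimately show False using \<open>R > 0\<close> by simp
  qed
  have "(\<Sum>(x, y)\<in>ordered_pairs ((\<lambda>k. k * (1 + q * j)) ` {1..N}). a (x - y)) \<le> real N * G j"
    unfolding G_def
    by (rule sum_ordered_pairs_dilation_le[OF nonneg]) simp_all
  also have "\<dots> \<le> real N * C / real R"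
    using mult_left_mono[OF \<open>G j \<le> C / real R\<close>, of "real N"] by simp
  finally show ?thesis using \<open>j < R\<close> by blast
qed

lemma ex_nat_between_double:
  fixes t :: real
  assumes "t \<ge> 1"
  shows "\<exists>R::nat. t \<le> real R \<and> real R \<le> 2 * t"
  using assms by (intro exI[of _ "nat \<lceil>t\<rceil>"]) linarith

lemma powr_divide_le_of_le_powr:
  fixes x y c e :: real
  assumes "0 \<le> x" "x \<le> y powr c" "c > 0" "e \<ge> 0"
  shows "x powr (e / c) \<le> y powr e"
proof -
  have "x powr (e / c) \<le> (y powr c) powr (e / c)"
    using assms by (intro powr_mono2) auto
  also have "\<dots> = y powr e" using \<open>c > 0\<close> by (simp add: powr_powr)
  finally show ?thesis .
qed

lemma ex_dilation_sum_ordered_pairs_lt: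
  fixes a :: "nat \<Rightarrow> real" and X :: real
  assumes nonneg: "\<And>n. n \<ge> 1 \<Longrightarrow> a n \<ge> 0" and sum_le: "\<And>M. (\<Sum>n=1..M. a n) \<le> 1"
    and "q > 0" and "N > 0" and "X > 4 * real q"
    and divisors: "\<And>m. m > 0 \<Longrightarrow> real m \<le> real N ^ 2 * X ^ 3 \<Longrightarrow>
      real (card (coprime_divisors q m)) \<le> X"
  shows "\<exists>l>0. real l < real N * X ^ 3 \<and>
    (\<Sum>(x, y)\<in>ordered_pairs ((\<lambda>k. k * l) ` {1..N}). a (x - y)) < 1 / X"
proof -
  define A where "A = real N * X ^ 3"
  have "X > 1" using \<open>X > 4 * real q\<close> \<open>q > 0\<close> by linarith
  have "A \<ge> X ^ 3"
    unfolding A_def using mult_right_mono[of 1 "real N" "X ^ 3"] \<open>N > 0\<close> \<open>X > 1\<close> by simp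
  moreover have "X ^ 3 \<ge> X" using power_increasing[of 1 3 X] \<open>X > 1\<close> by simp
  ultimately have "A / (4 * q) \<ge> 1" using \<open>X > 4 * real q\<close> \<open>q > 0\<close> by simp
  then obtain R :: nat where R_ge: "A / (4 * q) \<le> real R" and R_le: "real R \<le> A / (2 * q)"
    using ex_nat_between_double[of "A / (4 * q)"] by auto
  have "R > 0" using R_ge \<open>A / (4 * q) \<ge> 1\<close> by simp
  have l_lt: "real (1 + q * j) < A" if "j < R" for j
  proof -
    have "1 + q * j \<le> q * Suc j" using \<open>q > 0\<close> by simp
    also have "\<dots> \<le> q * R" using that by (intro mult_le_mono2) simp
    finally have "real (1 + q * j) \<le> real q * real R" by (metis of_nat_le_iff of_nat_mult)
    also have "\<dots> \<le> A / 2" using R_le \<open>q > 0\<close> by (simp add: field_simps)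
    also have "\<dots> < A" using \<open>A / (4 * q) \<ge> 1\<close> \<open>q > 0\<close> by (simp add: field_simps)
    finally show ?thesis .
  qed
  have divisors_R: "real (card (coprime_divisors q (k * (1 + q * j)))) \<le> X"
    if "j < R" and "k \<in> {1..<N}" for j k
  proof (rule divisors)
    have "real (k * (1 + q * j)) \<le> real N * A"
      unfolding of_nat_mult using that l_lt[OF \<open>j < R\<close>] by (intro mult_mono) auto
    also have "\<dots> = real N ^ 2 * X ^ 3" by (simp add: A_def power2_eq_square)
    finally show "real (k * (1 + q * j)) \<le> real N ^ 2 * X ^ 3" .
  qed (use that in simp)
  obtain j where "j < R"
    and F: "(\<Sum>(x, y)\<in>ordered_pairs ((\<lambda>k. k * (1 + q * j)) ` {1..N}). a (x - y))
      \<le> real N * X / real R"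
    using ex_dilation_sum_ordered_pairs_le[where C = X and N = N,
        OF nonneg sum_le \<open>q > 0\<close> _ \<open>R > 0\<close> divisors_R] \<open>X > 1\<close>
    by auto
  have "real N * X / real R \<le> real N * X / (A / (4 * q))"
    using R_ge \<open>R > 0\<close> \<open>X > 1\<close> \<open>A / (4 * q) \<ge> 1\<close>
    by (intro divide_left_mono mult_pos_pos) auto
  also have "\<dots> = 4 * q / X ^ 2"
    using \<open>N > 0\<close> \<open>X > 1\<close> by (simp add: A_def field_simps power2_eq_square power3_eq_cube)
  also have "\<dots> < 1 / X"
    using \<open>X > 4 * real q\<close> \<open>X > 1\<close> by (simp add: field_simps power2_eq_square)
  finally have "(\<Sum>(x, y)\<in>ordered_pairs ((\<lambda>k. k * (1 + q * j)) ` {1..N}). a (x - y)) < 1 / X"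
    using F by linarith
  with l_lt[OF \<open>j < R\<close>] show ?thesis
    unfolding A_def by (intro exI[of _ "1 + q * j"]) simp
qed

lemma ex_dilation_sum_ordered_pairs_lt_powr:
  fixes a :: "nat \<Rightarrow> real" and \<epsilon> :: real
  assumes nonneg: "\<And>n. n \<ge> 1 \<Longrightarrow> a n \<ge> 0" and sum_le: "\<And>M. (\<Sum>n=1..M. a n) \<le> 1"
    and "q > 0" and "\<epsilon> > 0" and "N > 0"
    and divisors: "\<And>m. m > 0 \<Longrightarrow> real (card (coprime_divisors q m)) \<le> real m powr (\<epsilon> / (2 + 3 * \<epsilon>))"
    and large: "4 * real q < real N powr \<epsilon>"
  shows "\<exists>l>0. real l < real N powr (1 + 3 * \<epsilon>) \<and>
    (\<Sum>(x, y)\<in>ordered_pairs ((\<lambda>k. k * l) ` {1..N}). a (x - y)) < 1 / real N powr \<epsilon>"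
proof -
  define X where "X = real N powr \<epsilon>"
  have "real N powr (1 + \<epsilon> + \<epsilon> + \<epsilon>) = real N powr 1 * X * X * X"
    unfolding powr_add X_def ..
  then have cube: "real N powr (1 + 3 * \<epsilon>) = real N * X ^ 3"
    using \<open>N > 0\<close> by (simp add: power3_eq_cube algebra_simps)
  have "real N ^ 2 * X ^ 3 = real N powr (2 + 3 * \<epsilon>)"
  proof -
    have "real N ^ 2 * X ^ 3 = real N powr 1 * real N powr (1 + 3 * \<epsilon>)"
      using \<open>N > 0\<close> by (simp add: cube power2_eq_square)
    also have "\<dots> = real N powr (2 + 3 * \<epsilon>)" unfolding powr_add[symmetric] by simp
    finally show ?thesis .
  qed
  then have "real (card (coprime_divisors q m)) \<le> X"
    if "m > 0" and "real m \<le> real N ^ 2 * X ^ 3" for m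
    using divisors[OF \<open>m > 0\<close>] powr_divide_le_of_le_powr[of "real m" "real N" "2 + 3 * \<epsilon>" \<epsilon>]
      that \<open>\<epsilon> > 0\<close> by (simp add: X_def)
  then show ?thesis
    unfolding cube X_def[symmetric]
    by (intro ex_dilation_sum_ordered_pairs_lt[OF nonneg sum_le \<open>q > 0\<close> \<open>N > 0\<close>])
      (use large in \<open>simp_all add: X_def\<close>)
qed

theorem corollary10:
  fixes a :: "nat \<Rightarrow> real"
  assumes nonneg: "\<And>n. n \<ge> 1 \<Longrightarrow> a n \<ge> 0"
    and sum_le: "\<And>M. (\<Sum>n=1..M. a n) \<le> 1"
  shows "\<forall>\<alpha>::real. \<alpha> > 1 \<longrightarrow>
    (\<exists>\<epsilon>::real. \<epsilon> > 0 \<and> (\<exists>\<nu>::nat. \<forall>N::nat. N \<ge> \<nu> \<longrightarrow>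
      (\<exists>l::nat. l > 0 \<and> real l < real N powr \<alpha> \<and>
        (\<Sum>(lam, \<mu>) \<in> {(x, y). x \<in> (\<lambda>k. k * l) ` {1..N} \<and> y \<in> (\<lambda>k. k * l) ` {1..N} \<and> y < x}.
            a (lam - \<mu>)) < 1 / real N powr \<epsilon>)))"
proof (intro allI impI)
  fix \<alpha> :: real assume "\<alpha> > 1"
  define \<epsilon> where "\<epsilon> = (\<alpha> - 1) / 3"
  have "\<epsilon> > 0" and \<alpha>: "\<alpha> = 1 + 3 * \<epsilon>" using \<open>\<alpha> > 1\<close> by (simp_all add: \<epsilon>_def field_simps)
  obtain q where "q > 0"
    and divisors: "\<And>m. m > 0 \<Longrightarrow> real (card (coprime_divisors q m)) \<le> real m powr (\<epsilon> / (2 + 3 * \<epsilon>))"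
    using ex_card_coprime_divisors_le_powr[of "\<epsilon> / (2 + 3 * \<epsilon>)"] \<open>\<epsilon> > 0\<close> by auto
  have "filterlim (\<lambda>N. real N powr \<epsilon>) at_top sequentially"
    using real_powr_at_top[OF \<open>\<epsilon> > 0\<close>] filterlim_real_sequentially by (rule filterlim_compose)
  then obtain \<nu> where \<nu>: "\<And>N. N \<ge> \<nu> \<Longrightarrow> 4 * real q < real N powr \<epsilon>"
    unfolding filterlim_at_top_dense eventually_sequentially by blast
  have "\<exists>l>0. real l < real N powr \<alpha> \<and>
      (\<Sum>(x, y)\<in>ordered_pairs ((\<lambda>k. k * l) ` {1..N}). a (x - y)) < 1 / real N powr \<epsilon>"
    if "N \<ge> \<nu>" for N
  proof -
    have "N > 0" using \<nu>[OF that] by (cases N) auto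
    then show ?thesis
      unfolding \<alpha> using \<nu>[OF that] divisors
      by (intro ex_dilation_sum_ordered_pairs_lt_powr[OF nonneg sum_le \<open>q > 0\<close> \<open>\<epsilon> > 0\<close>])
  qed
  then show "\<exists>\<epsilon>>0. \<exists>\<nu>. \<forall>N\<ge>\<nu>. \<exists>l>0. real l < real N powr \<alpha> \<and>
      (\<Sum>(lam, \<mu>)\<in>{(x, y). x \<in> (\<lambda>k. k * l) ` {1..N} \<and> y \<in> (\<lambda>k. k * l) ` {1..N} \<and> y < x}.
        a (lam - \<mu>)) < 1 / real N powr \<epsilon>"
    using \<open>\<epsilon> > 0\<close> unfolding ordered_pairs_def by blast
qed

end
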